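(* For $i\ge0$, the ring homomorphism $\phi_i:(A/\!/A(i))_*\to(A/\!/A(i-1))_*$ defined on the polynomial generators by $\phi_i(\bar\xi_k^{2^l})=\bar\xi_{k-1}^{2^l}$ for $k>1$ and $\phi_i(\bar\xi_1^{2^{i+1}})=1$ is a map of ungraded $A(i)_*$-comodules.
   Context: $A_*$ is the mod $2$ dual Steenrod algebra, $\bar\xi_k$ the conjugate of Milnor's generator $\xi_k$, $|\bar\xi_k|=2^k-1$, with coproduct $\psi(\bar\xi_k)=\sum_{k_1+k_2=k}\bar\xi_{k_1}\otimes\bar\xi_{k_2}^{2^{k_1}}$. For $i\ge-1$, $A(i)_*=\mathbb{F}_2[\bar\xi_1,\dots,\bar\xi_{i+1}]/(\bar\xi_1^{2^{i+1}},\bar\xi_2^{2^i},\dots,\bar\xi_{i+1}^2)$ is the quotient Hopf algebra of $A_*$ dual to $A(i)$, and $(A/\!/A(i))_*=A_*\square_{A(i)_*}\mathbb{F}_2=\mathbb{F}_2[\bar\xi_1^{2^{i+1}},\bar\xi_2^{2^i},\dots,\bar\xi_{i+1}^2,\bar\xi_{i+2},\bar\xi_{i+3},\dots]$, a left $A_*$-subcomodule algebra of $A_*$; it is regarded as an $A(i)_*$-comodule via $A_*\to A(i)_*$ (and likewise $(A/\!/A(i-1))_*$). *)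

theory Defs
  imports "HOL-Library.Poly_Mapping" "HOL-Library.Z2"
begin

(* Polynomials over F_2 (type bit) in variables of type 'v:
   a polynomial is a finitely supported map  monomial => coefficient,
   a monomial is a finitely supported map  variable => exponent. *)
type_synonym 'v pol = "('v \<Rightarrow>\<^sub>0 nat) \<Rightarrow>\<^sub>0 bit"

definition var :: "'v \<Rightarrow> 'v pol" where
  "var v = Poly_Mapping.single (Poly_Mapping.single v 1) 1"

definition const :: "bit \<Rightarrow> 'v pol" where
  "const c = Poly_Mapping.single 0 c"

definition peval :: "('v \<Rightarrow> 'w pol) \<Rightarrow> 'v pol \<Rightarrow> 'w pol" where
  "peval f p = (\<Sum>m\<in>Poly_Mapping.keys p. const (Poly_Mapping.lookup p m) * (\<Prod>v\<in>Poly_Mapping.keys (m::'v \<Rightarrow>\<^sub>0 nat). f v ^ Poly_Mapping.lookup m v))"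

(* A_star = F_2[xi_1, xi_2, ...]: variable k stands for conj(xi_k), k >= 1;
   variable 0 is not used (A_star = polynomials not involving variable 0). *)
definition Astar :: "nat pol set" where
  "Astar = {p. \<forall>m\<in>Poly_Mapping.keys p. Poly_Mapping.lookup m 0 = 0}"

definition xi :: "nat \<Rightarrow> nat pol" where
  "xi k = (if k = 0 then 1 else var k)"

(* A_star (x) A_star = F_2[xi_k (x) 1, 1 (x) xi_k]: Inl k is xi_k (x) 1, Inr k is 1 (x) xi_k *)
definition xiL :: "nat \<Rightarrow> (nat + nat) pol" where
  "xiL k = (if k = 0 then 1 else var (Inl k))"

definition xiR :: "nat \<Rightarrow> (nat + nat) pol" where
  "xiR k = (if k = 0 then 1 else var (Inr k))"

definition psi :: "nat pol \<Rightarrow> (nat + nat) pol" where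
  "psi = peval (\<lambda>k. \<Sum>k1\<le>k. xiL k1 * xiR (k - k1) ^ (2 ^ k1))"

(* (A//A(n-1))_star for n >= 0 (n = i+1 gives (A//A(i))_star):
   F_2[xi_1^(2^n), xi_2^(2^(n-1)), ..., xi_n^2, xi_(n+1), ...], i.e. the span of the
   monomials in which the exponent of xi_k is divisible by 2^(n+1-k). *)
definition quotA :: "nat \<Rightarrow> nat pol set" where
  "quotA n = {p \<in> Astar. \<forall>m\<in>Poly_Mapping.keys p. \<forall>k\<ge>1. (2::nat) ^ (n + 1 - k) dvd Poly_Mapping.lookup m k}"

(* projection A_star (x) A_star -> A(i)_star (x) A_star, where
   A(i)_star = A_star/(xi_1^(2^(i+1)), xi_2^(2^i), ..., xi_(i+1)^2, xi_(i+2), xi_(i+3), ...):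
   kill the monomials whose left exponent of xi_k is >= 2^(i+2-k). *)
definition truncL :: "nat \<Rightarrow> (nat + nat) pol \<Rightarrow> (nat + nat) pol" where
  "truncL i p = (\<Sum>m\<in>Poly_Mapping.keys p.
      if (\<forall>k\<ge>1. Poly_Mapping.lookup m (Inl k) < 2 ^ (i + 2 - k))
      then Poly_Mapping.single m (Poly_Mapping.lookup p m) else 0)"

definition coact :: "nat \<Rightarrow> nat pol \<Rightarrow> (nat + nat) pol" where
  "coact i a = truncL i (psi a)"

(* id (x) f : A_star (x) A_star -> A_star (x) A_star, extended linearly from monomials *)
definition embR :: "nat pol \<Rightarrow> (nat + nat) pol" where
  "embR = peval (\<lambda>k. var (Inr k))"

definition idtens :: "(nat pol \<Rightarrow> nat pol) \<Rightarrow> (nat + nat) pol \<Rightarrow> (nat + nat) pol" where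
  "idtens f p = (\<Sum>m\<in>Poly_Mapping.keys p. const (Poly_Mapping.lookup p m)
      * (\<Prod>v\<in>{v\<in>Poly_Mapping.keys m. isl v}. var v ^ Poly_Mapping.lookup m v)
      * embR (f (\<Prod>k\<in>{k. Inr k \<in> Poly_Mapping.keys m}. var k ^ Poly_Mapping.lookup m (Inr k))))"

definition ring_hom_on :: "nat pol set \<Rightarrow> nat pol set \<Rightarrow> (nat pol \<Rightarrow> nat pol) \<Rightarrow> bool" where
  "ring_hom_on S T f \<longleftrightarrow> f ` S \<subseteq> T \<and> f 1 = 1 \<and>
     (\<forall>a\<in>S. \<forall>b\<in>S. f (a + b) = f a + f b \<and> f (a * b) = f a * f b)"

(* phi_i on the polynomial generators xi_k^(2^l) of (A//A(i))_star, l = i+2-k *)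
definition phi_gens :: "nat \<Rightarrow> (nat pol \<Rightarrow> nat pol) \<Rightarrow> bool" where
  "phi_gens i f \<longleftrightarrow> f (xi 1 ^ (2 ^ (i + 1))) = 1 \<and>
     (\<forall>k>1. f (xi k ^ (2 ^ (i + 2 - k))) = xi (k - 1) ^ (2 ^ (i + 2 - k)))"

definition comod_map :: "nat \<Rightarrow> nat pol set \<Rightarrow> (nat pol \<Rightarrow> nat pol) \<Rightarrow> bool" where
  "comod_map i S f \<longleftrightarrow> (\<forall>a\<in>S. coact i (f a) = truncL i (idtens f (psi a)))"

end

theory Submission
  imports Defs
begin

(* Polynomials over F_2 are finitely supported maps monomial => bit, and every
   map in sight (psi, phi_i, id (x) phi_i) is a substitution homomorphism peval. *)

section \<open>Substitution homomorphisms\<close>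

lemma const_0 [simp]: "const 0 = 0"
  by (simp add: const_def)

lemma const_1 [simp]: "const 1 = 1"
  by (simp add: const_def)

lemma const_add: "const (a + b) = const a + const b"
  unfolding const_def by (rule single_add)

lemma const_mult: "const (a * b) = const a * const b"
  by (simp only: const_def mult_single add_0)

definition mon :: "('v \<Rightarrow> 'a::comm_monoid_mult) \<Rightarrow> ('v \<Rightarrow>\<^sub>0 nat) \<Rightarrow> 'a" where
  "mon f m = (\<Prod>v\<in>Poly_Mapping.keys m. f v ^ Poly_Mapping.lookup m v)"

lemma peval_mon_sum: "peval f p = (\<Sum>m\<in>Poly_Mapping.keys p. const (Poly_Mapping.lookup p m) * mon f m)"
  by (simp add: peval_def mon_def)

lemma mon_superset:
  "finite A \<Longrightarrow> Poly_Mapping.keys m \<subseteq> A \<Longrightarrow> mon f m = (\<Prod>v\<in>A. f v ^ Poly_Mapping.lookup m v)"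
  unfolding mon_def by (rule prod.mono_neutral_left) (auto simp: in_keys_iff)

lemma peval_superset:
  "finite A \<Longrightarrow> Poly_Mapping.keys p \<subseteq> A \<Longrightarrow>
   peval f p = (\<Sum>m\<in>A. const (Poly_Mapping.lookup p m) * mon f m)"
  unfolding peval_mon_sum by (rule sum.mono_neutral_left) (auto simp: in_keys_iff)

lemma mon_add: "mon f (m1 + m2) = mon f m1 * mon f m2"
proof -
  let ?A = "Poly_Mapping.keys m1 \<union> Poly_Mapping.keys m2"
  have "mon f (m1 + m2) = (\<Prod>v\<in>?A. f v ^ Poly_Mapping.lookup (m1 + m2) v)"
    by (rule mon_superset) (auto simp: keys_add)
  also have "\<dots> = (\<Prod>v\<in>?A. f v ^ Poly_Mapping.lookup m1 v * f v ^ Poly_Mapping.lookup m2 v)"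
    by (simp add: lookup_add power_add)
  also have "\<dots> = mon f m1 * mon f m2"
    by (simp add: prod.distrib mon_superset[of ?A])
  finally show ?thesis .
qed

lemma peval_add: "peval f (p + q) = peval f p + peval f q"
proof -
  let ?A = "Poly_Mapping.keys p \<union> Poly_Mapping.keys q"
  have "peval f (p + q) = (\<Sum>m\<in>?A. const (Poly_Mapping.lookup (p + q) m) * mon f m)"
    by (rule peval_superset) (auto simp: keys_add)
  also have "\<dots> = (\<Sum>m\<in>?A. const (Poly_Mapping.lookup p m) * mon f m
                          + const (Poly_Mapping.lookup q m) * mon f m)"
    by (simp only: lookup_add const_add distrib_right)
  also have "\<dots> = peval f p + peval f q"
    by (simp add: sum.distrib peval_superset[of ?A])
  finally show ?thesis .
qed

lemma mon_zero [simp]: "mon f 0 = 1"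
  by (simp add: mon_def)

lemma peval_zero [simp]: "peval f 0 = 0"
  by (simp add: peval_def)

lemma peval_single: "peval f (Poly_Mapping.single m c) = const c * mon f m"
  by (simp add: peval_mon_sum)

lemma peval_sum: "peval f (sum h A) = (\<Sum>a\<in>A. peval f (h a))"
  by (induction A rule: infinite_finite_induct) (auto simp: peval_add)

lemma pm_expansion: "p = (\<Sum>m\<in>Poly_Mapping.keys p. Poly_Mapping.single m (Poly_Mapping.lookup p m))"
proof (rule poly_mapping_eqI)
  fix k
  have "Poly_Mapping.lookup (\<Sum>m\<in>Poly_Mapping.keys p. Poly_Mapping.single m (Poly_Mapping.lookup p m)) k
     = (\<Sum>m\<in>Poly_Mapping.keys p. if m = k then Poly_Mapping.lookup p m else 0)"
    by (simp add: lookup_sum lookup_single when_def)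
  also have "\<dots> = Poly_Mapping.lookup p k"
    by (simp add: in_keys_iff)
  finally show "Poly_Mapping.lookup p k =
      Poly_Mapping.lookup (\<Sum>m\<in>Poly_Mapping.keys p. Poly_Mapping.single m (Poly_Mapping.lookup p m)) k"
    by simp
qed

lemma peval_single_mult: "peval f (Poly_Mapping.single m c * q) = const c * mon f m * peval f q"
proof -
  have "peval f (Poly_Mapping.single m c * q)
      = peval f (Poly_Mapping.single m c * (\<Sum>n\<in>Poly_Mapping.keys q. Poly_Mapping.single n (Poly_Mapping.lookup q n)))"
    by (subst pm_expansion[of q]) simp
  also have "\<dots> = (\<Sum>n\<in>Poly_Mapping.keys q. const c * mon f m * (const (Poly_Mapping.lookup q n) * mon f n))"
    by (simp only: sum_distrib_left peval_sum mult_single peval_single const_mult mon_add)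
       (simp add: mult_ac)
  also have "\<dots> = const c * mon f m * peval f q"
    by (simp add: peval_mon_sum sum_distrib_left)
  finally show ?thesis .
qed

lemma peval_mult: "peval f (p * q) = peval f p * peval f q"
proof -
  have "peval f (p * q) = peval f ((\<Sum>m\<in>Poly_Mapping.keys p. Poly_Mapping.single m (Poly_Mapping.lookup p m)) * q)"
    by (subst pm_expansion[of p]) simp
  also have "\<dots> = (\<Sum>m\<in>Poly_Mapping.keys p. const (Poly_Mapping.lookup p m) * mon f m * peval f q)"
    by (simp add: sum_distrib_right peval_sum peval_single_mult)
  also have "\<dots> = peval f p * peval f q"
    by (simp add: peval_mon_sum sum_distrib_right)
  finally show ?thesis .
qed

lemma peval_one [simp]: "peval f 1 = 1"
  using peval_single[of f 0 1] by simp

lemma peval_var [simp]: "peval f (var v) = f v"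
  by (simp add: var_def peval_single mon_def)

lemma peval_const [simp]: "peval f (const c) = const c"
  by (simp add: const_def peval_single)

lemma peval_power: "peval f (p ^ n) = peval f p ^ n"
  by (induction n) (auto simp: peval_mult)

lemma peval_prod: "peval f (prod h A) = (\<Prod>a\<in>A. peval f (h a))"
  by (induction A rule: infinite_finite_induct) (auto simp: peval_mult)

lemma peval_mon: "peval h (mon f m) = mon (\<lambda>v. peval h (f v)) m"
  by (simp add: mon_def peval_prod peval_power)

lemma peval_comp: "peval h (peval f p) = peval (\<lambda>v. peval h (f v)) p"
  by (simp add: peval_mon_sum[of f] peval_sum peval_mult peval_mon) (simp add: peval_mon_sum)

section \<open>Polynomials supported on a set of monomials\<close>

definition supported :: "(('v \<Rightarrow>\<^sub>0 nat) \<Rightarrow> bool) \<Rightarrow> 'v pol set" where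
  "supported P = {p. \<forall>m\<in>Poly_Mapping.keys p. P m}"

lemma supported_0 [simp]: "0 \<in> supported P"
  by (simp add: supported_def)

lemma supported_add: "p \<in> supported P \<Longrightarrow> q \<in> supported P \<Longrightarrow> p + q \<in> supported P"
  using keys_add[of p q] by (auto simp: supported_def)

lemma supported_single: "P m \<Longrightarrow> Poly_Mapping.single m c \<in> supported P"
  by (simp add: supported_def)

lemma supported_sum: "(\<And>a. a \<in> A \<Longrightarrow> h a \<in> supported P) \<Longrightarrow> sum h A \<in> supported P"
  by (induction A rule: infinite_finite_induct) (auto intro: supported_add)

(* a submonoid of monomials spans a subring *)
locale monomial_submonoid =
  fixes P :: "('v \<Rightarrow>\<^sub>0 nat) \<Rightarrow> bool"
  assumes P_zero: "P 0" and P_add: "\<And>a b. P a \<Longrightarrow> P b \<Longrightarrow> P (a + b)"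
begin

lemma one_in [simp]: "1 \<in> supported P"
  using P_zero by (simp add: supported_def)

lemma const_in [simp]: "const c \<in> supported P"
  by (simp add: const_def supported_single P_zero)

lemma mult_in: "p \<in> supported P \<Longrightarrow> q \<in> supported P \<Longrightarrow> p * q \<in> supported P"
  using keys_mult[of p q] by (auto simp: supported_def intro!: P_add)

lemma power_in: "p \<in> supported P \<Longrightarrow> p ^ n \<in> supported P"
  by (induction n) (auto intro: mult_in)

lemma prod_in: "(\<And>a. a \<in> A \<Longrightarrow> h a \<in> supported P) \<Longrightarrow> prod h A \<in> supported P"
  by (induction A rule: infinite_finite_induct) (auto intro: mult_in)

lemma peval_in:
  assumes "monomial_submonoid Q" and "\<And>m. P m \<Longrightarrow> mon f m \<in> supported Q"
  shows "p \<in> supported P \<Longrightarrow> peval f p \<in> supported Q"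
  unfolding peval_mon_sum
  by (intro supported_sum monomial_submonoid.mult_in[OF assms(1)]
        monomial_submonoid.const_in[OF assms(1)] assms(2)) (auto simp: supported_def)

end

(* an upward closed set of monomials spans an ideal *)
locale monomial_upset =
  fixes P :: "('v \<Rightarrow>\<^sub>0 nat) \<Rightarrow> bool"
  assumes P_up: "\<And>a b. P b \<Longrightarrow> P (a + b)"
begin

lemma ideal_in: "p \<in> supported P \<Longrightarrow> q * p \<in> supported P"
  using keys_mult[of q p] by (auto simp: supported_def intro!: P_up)

lemma power_diff_in: "x - y \<in> supported P \<Longrightarrow> x ^ n - y ^ n \<in> supported P"
proof (induction n)
  case (Suc n)
  have "x ^ Suc n - y ^ Suc n = x * (x ^ n - y ^ n) + y ^ n * (x - y)"
    by (simp add: algebra_simps)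
  then show ?case using Suc by (auto intro!: supported_add ideal_in)
qed simp

lemma prod_diff_in:
  "(\<And>a. a \<in> A \<Longrightarrow> x a - y a \<in> supported P) \<Longrightarrow> prod x A - prod y A \<in> supported P"
proof (induction A rule: infinite_finite_induct)
  case (insert a A)
  have "prod x (insert a A) - prod y (insert a A) = x a * (prod x A - prod y A) + prod y A * (x a - y a)"
    using insert.hyps by (simp add: algebra_simps)
  then show ?case using insert by (auto intro!: supported_add ideal_in)
qed auto

lemma peval_diff_in:
  assumes "\<And>m. Q m \<Longrightarrow> mon f m - mon g m \<in> supported P" and "p \<in> supported Q"
  shows "peval f p - peval g p \<in> supported P"
proof -
  have "peval f p - peval g p
      = (\<Sum>m\<in>Poly_Mapping.keys p. const (Poly_Mapping.lookup p m) * (mon f m - mon g m))"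
    by (simp add: peval_mon_sum sum_subtractf right_diff_distrib)
  also have "\<dots> \<in> supported P"
    using assms by (intro supported_sum ideal_in) (auto simp: supported_def)
  finally show ?thesis .
qed

end

section \<open>Characteristic two\<close>

lemma pol_add_self [simp]: "(p::'v pol) + p = 0"
proof (rule poly_mapping_eqI)
  fix k
  have "\<And>b::bit. b + b = 0" by (case_tac b) simp_all
  then show "Poly_Mapping.lookup (p + p) k = Poly_Mapping.lookup 0 k"
    by (simp only: lookup_add lookup_zero)
qed

lemma frobenius: "((p::'v pol) + q) ^ (2 ^ l) = p ^ (2 ^ l) + q ^ (2 ^ l)"
proof (induction l)
  case (Suc l)
  have square: "(x + y) ^ 2 = x ^ 2 + y ^ 2" for x y :: "'v pol"
  proof -
    have "(x + y) ^ 2 = x ^ 2 + y ^ 2 + (x * y + x * y)"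
      by (simp add: power2_sum mult_2)
    then show ?thesis by simp
  qed
  have "(p + q) ^ (2 ^ Suc l) = ((p + q) ^ (2 ^ l)) ^ 2"
    by (simp add: power_mult[symmetric] mult.commute)
  also have "\<dots> = p ^ (2 ^ Suc l) + q ^ (2 ^ Suc l)"
    by (simp add: Suc square power_mult[symmetric] mult.commute)
  finally show ?case .
qed simp

lemma frobenius_sum: "(sum (h :: 'a \<Rightarrow> 'v pol) A) ^ (2 ^ l) = (\<Sum>a\<in>A. h a ^ (2 ^ l))"
  by (induction A rule: infinite_finite_induct) (auto simp: frobenius power_0_left)

lemma var_power: "var v ^ n = Poly_Mapping.single (Poly_Mapping.single v n) 1"
  by (induction n) (simp_all add: var_def mult_single single_add[symmetric])

lemma prod_single:
  "(\<Prod>k\<in>A. Poly_Mapping.single (h k) (1::'b::comm_semiring_1)) = Poly_Mapping.single (\<Sum>k\<in>A. h k) 1"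
  by (induction A rule: infinite_finite_induct) (auto simp: mult_single)

definition kept :: "nat \<Rightarrow> (nat + nat \<Rightarrow>\<^sub>0 nat) \<Rightarrow> bool" where
  "kept i m \<longleftrightarrow> (\<forall>k\<ge>1. Poly_Mapping.lookup m (Inl k) < 2 ^ (i + 2 - k))"

lemma lookup_truncL:
  "Poly_Mapping.lookup (truncL i p) m = (if kept i m then Poly_Mapping.lookup p m else 0)"
proof -
  have "Poly_Mapping.lookup (truncL i p) m =
     (\<Sum>m'\<in>Poly_Mapping.keys p. if m' = m then (if kept i m then Poly_Mapping.lookup p m' else 0) else 0)"
    unfolding truncL_def kept_def[symmetric] lookup_sum
    by (rule sum.cong) (auto simp: lookup_single when_def)
  then show ?thesis
    by (auto simp: in_keys_iff)
qed

(* the killed monomials span an ideal: the kernel of the truncation *)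
interpretation killed: monomial_upset "\<lambda>m. \<not> kept i m"
proof
  fix a b :: "nat + nat \<Rightarrow>\<^sub>0 nat"
  assume "\<not> kept i b"
  then obtain k where "k \<ge> 1" "Poly_Mapping.lookup b (Inl k) \<ge> 2 ^ (i + 2 - k)"
    by (auto simp: kept_def not_less)
  then show "\<not> kept i (a + b)"
    by (auto simp: kept_def lookup_add not_less intro!: exI[of _ k])
qed

lemma truncL_eq: "p - q \<in> supported (\<lambda>m. \<not> kept i m) \<Longrightarrow> truncL i p = truncL i q"
proof (rule poly_mapping_eqI)
  fix m
  assume diff: "p - q \<in> supported (\<lambda>m. \<not> kept i m)"
  show "Poly_Mapping.lookup (truncL i p) m = Poly_Mapping.lookup (truncL i q) m"
  proof (cases "kept i m")
    case True
    then have "m \<notin> Poly_Mapping.keys (p - q)"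
      using diff by (auto simp: supported_def)
    then have "Poly_Mapping.lookup p m - Poly_Mapping.lookup q m = 0"
      by (simp add: in_keys_iff lookup_minus)
    then have "Poly_Mapping.lookup p m = Poly_Mapping.lookup q m"
      by (rule right_minus_eq[THEN iffD1])
    then show ?thesis using True by (simp add: lookup_truncL)
  qed (simp add: lookup_truncL)
qed

definition right_factor :: "(nat + nat \<Rightarrow>\<^sub>0 nat) \<Rightarrow> nat pol" where
  "right_factor m = (\<Prod>k\<in>{k. Inr k \<in> Poly_Mapping.keys m}. var k ^ Poly_Mapping.lookup m (Inr k))"

lemma idtens_cong:
  "(\<And>m. m \<in> Poly_Mapping.keys p \<Longrightarrow> f (right_factor m) = f' (right_factor m)) \<Longrightarrow>
   idtens f p = idtens f' p"
  unfolding idtens_def right_factor_def[symmetric] by (rule sum.cong) auto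

definition id_tensor_subst :: "(nat \<Rightarrow> nat pol) \<Rightarrow> nat + nat \<Rightarrow> (nat + nat) pol" where
  "id_tensor_subst g v = (case v of Inl k \<Rightarrow> var (Inl k) | Inr k \<Rightarrow> embR (g k))"

lemma mon_id_tensor_subst:
  "(\<Prod>v\<in>{v\<in>Poly_Mapping.keys m. isl v}. var v ^ Poly_Mapping.lookup m v) * embR (peval g (right_factor m))
   = mon (id_tensor_subst g) m"
proof -
  let ?L = "{v\<in>Poly_Mapping.keys m. isl v}" and ?R = "{k. Inr k \<in> Poly_Mapping.keys m}"
  let ?term = "\<lambda>v. id_tensor_subst g v ^ Poly_Mapping.lookup m v"
  have "finite ?R"
    using finite_vimageI[OF finite_keys inj_Inr, of m] by (simp add: vimage_def)
  have right: "embR (peval g (right_factor m)) = (\<Prod>v\<in>Inr ` ?R. ?term v)"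
    by (simp add: right_factor_def embR_def peval_comp peval_prod peval_power id_tensor_subst_def
                  prod.reindex inj_on_def)
  have left: "(\<Prod>v\<in>?L. var v ^ Poly_Mapping.lookup m v) = (\<Prod>v\<in>?L. ?term v)"
    by (rule prod.cong) (auto simp: id_tensor_subst_def split: sum.split)
  have "Poly_Mapping.keys m = ?L \<union> Inr ` ?R"
    by (auto simp: image_iff) (metis sum.collapse(2))
  then have "mon (id_tensor_subst g) m = (\<Prod>v\<in>?L \<union> Inr ` ?R. ?term v)"
    unfolding mon_def by simp
  also have "\<dots> = (\<Prod>v\<in>?L. ?term v) * (\<Prod>v\<in>Inr ` ?R. ?term v)"
    by (rule prod.union_disjoint) (auto simp: \<open>finite ?R\<close>)
  finally show ?thesis using left right by simp
qed

lemma idtens_peval: "idtens (peval g) p = peval (id_tensor_subst g) p"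
  unfolding idtens_def right_factor_def[symmetric] peval_mon_sum[of "id_tensor_subst g"]
  by (rule sum.cong) (auto simp: mon_id_tensor_subst[symmetric] mult.assoc)

section \<open>Existence and uniqueness of phi_i\<close>

definition quot_mon :: "nat \<Rightarrow> (nat \<Rightarrow>\<^sub>0 nat) \<Rightarrow> bool" where
  "quot_mon n m \<longleftrightarrow> Poly_Mapping.lookup m 0 = 0 \<and>
     (\<forall>k\<ge>1. (2::nat) ^ (n + 1 - k) dvd Poly_Mapping.lookup m k)"

lemma quotA_supported: "quotA n = supported (quot_mon n)"
  by (auto simp: quotA_def Astar_def supported_def quot_mon_def)

interpretation quot: monomial_submonoid "quot_mon n"
  by standard (auto simp: quot_mon_def lookup_add)

lemma quot_mon_power:
  assumes "quot_mon (i + 1) m" "k \<in> Poly_Mapping.keys m"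
  shows "k \<ge> 1"
    and "(x::'a::monoid_mult) ^ Poly_Mapping.lookup m k
         = (x ^ (2 ^ (i + 2 - k))) ^ (Poly_Mapping.lookup m k div 2 ^ (i + 2 - k))"
proof -
  show k1: "k \<ge> 1" using assms by (cases k) (auto simp: quot_mon_def in_keys_iff)
  have "(2::nat) ^ (i + 2 - k) dvd Poly_Mapping.lookup m k"
    using assms k1 by (auto simp: quot_mon_def)
  then show "x ^ Poly_Mapping.lookup m k = (x ^ (2 ^ (i + 2 - k))) ^ (Poly_Mapping.lookup m k div 2 ^ (i + 2 - k))"
    by (simp add: power_mult[symmetric])
qed

definition shift_subst :: "nat \<Rightarrow> nat pol" where
  "shift_subst k = (if k \<le> 1 then 1 else var (k - 1))"

abbreviation shift :: "nat pol \<Rightarrow> nat pol" where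
  "shift \<equiv> peval shift_subst"

lemma shift_maps: "p \<in> quotA (i + 1) \<Longrightarrow> shift p \<in> quotA i"
  unfolding quotA_supported
proof (rule quot.peval_in[OF quot.monomial_submonoid_axioms])
  fix m assume m: "quot_mon (i + 1) m"
  have "shift_subst k ^ Poly_Mapping.lookup m k \<in> supported (quot_mon i)" for k
  proof (cases "k \<le> 1")
    case False
    have "(2::nat) ^ (i + 1 - (k - 1)) dvd Poly_Mapping.lookup m k"
      using m False by (auto simp: quot_mon_def)
    then have "quot_mon i (Poly_Mapping.single (k - 1) (Poly_Mapping.lookup m k))"
      using False by (auto simp: quot_mon_def lookup_single when_def)
    then show ?thesis using False by (simp add: shift_subst_def var_power supported_single)
  qed (simp add: shift_subst_def)
  then show "mon shift_subst m \<in> supported (quot_mon i)"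
    unfolding mon_def by (intro quot.prod_in)
qed

lemma shift_gens: "phi_gens i shift"
  unfolding phi_gens_def by (auto simp: peval_power xi_def shift_subst_def)

lemma shift_hom: "ring_hom_on (quotA (i + 1)) (quotA i) shift"
  unfolding ring_hom_on_def using shift_maps by (auto simp: peval_add peval_mult)

definition quot_gen :: "nat \<Rightarrow> nat \<Rightarrow> nat pol" where
  "quot_gen i k = xi k ^ (2 ^ (i + 2 - k))"

lemma quot_gen_in: "k \<ge> 1 \<Longrightarrow> quot_gen i k \<in> quotA (i + 1)"
  unfolding quotA_supported quot_gen_def
  by (auto simp: xi_def var_power quot_mon_def lookup_single when_def intro!: supported_single)

lemma monomial_as_gens:
  assumes "quot_mon (i + 1) m"
  shows "Poly_Mapping.single m 1
       = (\<Prod>k\<in>Poly_Mapping.keys m. quot_gen i k ^ (Poly_Mapping.lookup m k div 2 ^ (i + 2 - k)))"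
proof -
  have "quot_gen i k ^ (Poly_Mapping.lookup m k div 2 ^ (i + 2 - k))
      = Poly_Mapping.single (Poly_Mapping.single k (Poly_Mapping.lookup m k)) 1"
    if "k \<in> Poly_Mapping.keys m" for k
    using quot_mon_power(2)[OF assms that, of "var k"] quot_mon_power(1)[OF assms that]
    by (simp add: quot_gen_def xi_def var_power)
  then have "(\<Prod>k\<in>Poly_Mapping.keys m. quot_gen i k ^ (Poly_Mapping.lookup m k div 2 ^ (i + 2 - k)))
      = (\<Prod>k\<in>Poly_Mapping.keys m. Poly_Mapping.single (Poly_Mapping.single k (Poly_Mapping.lookup m k)) 1)"
    by (rule prod.cong[OF refl])
  also have "\<dots> = Poly_Mapping.single (\<Sum>k\<in>Poly_Mapping.keys m. Poly_Mapping.single k (Poly_Mapping.lookup m k)) 1"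
    by (rule prod_single)
  finally show ?thesis
    by (simp add: pm_expansion[of m, symmetric])
qed

context
  fixes i :: nat and phi :: "nat pol \<Rightarrow> nat pol"
  assumes hom: "ring_hom_on (quotA (i + 1)) (quotA i) phi" and gens: "phi_gens i phi"
begin

lemma phi_add: "a \<in> quotA (i + 1) \<Longrightarrow> b \<in> quotA (i + 1) \<Longrightarrow> phi (a + b) = phi a + phi b"
  using hom by (simp add: ring_hom_on_def)

lemma phi_mult: "a \<in> quotA (i + 1) \<Longrightarrow> b \<in> quotA (i + 1) \<Longrightarrow> phi (a * b) = phi a * phi b"
  using hom by (simp add: ring_hom_on_def)

lemma phi_zero: "phi 0 = 0"
proof -
  have "phi 0 = phi 0 + phi 0" using phi_add[of 0 0] by (simp add: quotA_supported)
  then show ?thesis by simp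
qed

lemma phi_sum: "(\<And>a. a \<in> A \<Longrightarrow> h a \<in> quotA (i + 1)) \<Longrightarrow> phi (sum h A) = (\<Sum>a\<in>A. phi (h a))"
proof (induction A rule: infinite_finite_induct)
  case (insert a A)
  then have "sum h A \<in> quotA (i + 1)" unfolding quotA_supported by (intro supported_sum) auto
  then show ?case using insert by (simp add: phi_add)
qed (auto simp: phi_zero)

lemma phi_prod: "(\<And>a. a \<in> A \<Longrightarrow> h a \<in> quotA (i + 1)) \<Longrightarrow> phi (prod h A) = (\<Prod>a\<in>A. phi (h a))"
proof (induction A rule: infinite_finite_induct)
  case (insert a A)
  then have "prod h A \<in> quotA (i + 1)" unfolding quotA_supported by (intro quot.prod_in) auto
  then show ?case using insert by (simp add: phi_mult)
qed (use hom in \<open>auto simp: ring_hom_on_def\<close>)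

lemma phi_power: "x \<in> quotA (i + 1) \<Longrightarrow> phi (x ^ n) = phi x ^ n"
proof (induction n)
  case (Suc n)
  then have "x ^ n \<in> quotA (i + 1)" unfolding quotA_supported by (intro quot.power_in) auto
  then show ?case using Suc by (simp add: phi_mult)
qed (use hom in \<open>auto simp: ring_hom_on_def\<close>)

lemma phi_quot_gen: "k \<ge> 1 \<Longrightarrow> phi (quot_gen i k) = shift (quot_gen i k)"
  using gens shift_gens[of i] unfolding phi_gens_def quot_gen_def
  by (cases "k = 1") auto

lemma phi_monomial: "quot_mon (i + 1) m \<Longrightarrow> phi (Poly_Mapping.single m 1) = shift (Poly_Mapping.single m 1)"
  using quot_mon_power(1)[of i m] quot_gen_in[of _ i]
  by (simp add: monomial_as_gens phi_prod phi_power phi_quot_gen peval_prod peval_power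
                quotA_supported quot.power_in)

lemma phi_eq_shift: "a \<in> quotA (i + 1) \<Longrightarrow> phi a = shift a"
proof -
  assume a: "a \<in> quotA (i + 1)"
  have admissible: "quot_mon (i + 1) m" if "m \<in> Poly_Mapping.keys a" for m
    using a that by (simp add: quotA_supported supported_def)
  have expand: "a = (\<Sum>m\<in>Poly_Mapping.keys a. Poly_Mapping.single m 1)"
    by (subst pm_expansion) (simp add: in_keys_iff)
  have "phi a = (\<Sum>m\<in>Poly_Mapping.keys a. phi (Poly_Mapping.single m 1))"
    by (subst expand) (rule phi_sum, unfold quotA_supported, rule supported_single, rule admissible)
  also have "\<dots> = (\<Sum>m\<in>Poly_Mapping.keys a. shift (Poly_Mapping.single m 1))"
    by (rule sum.cong[OF refl], rule phi_monomial, rule admissible)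
  also have "\<dots> = shift a"
    by (subst (2) expand) (simp add: peval_sum)
  finally show ?thesis .
qed

end

section \<open>The comodule property\<close>

definition psi_gen :: "nat \<Rightarrow> (nat + nat) pol" where
  "psi_gen k = (\<Sum>k1\<le>k. xiL k1 * xiR (k - k1) ^ (2 ^ k1))"

lemma psi_peval: "psi = peval psi_gen"
  unfolding psi_def psi_gen_def[abs_def] ..

(* monomials of A_* (x) A_* whose right factor lies in (A//A(i))_*; psi maps
   (A//A(i))_* into their span, so id (x) phi only sees the values of phi on (A//A(i))_* *)
definition right_quot_mon :: "nat \<Rightarrow> (nat + nat \<Rightarrow>\<^sub>0 nat) \<Rightarrow> bool" where
  "right_quot_mon i m \<longleftrightarrow> Poly_Mapping.lookup m (Inr 0) = 0 \<and>
     (\<forall>k\<ge>1. (2::nat) ^ (i + 2 - k) dvd Poly_Mapping.lookup m (Inr k))"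

interpretation right_quot: monomial_submonoid "right_quot_mon i"
  by standard (auto simp: right_quot_mon_def lookup_add)

lemma right_factor_in: "right_quot_mon i m \<Longrightarrow> right_factor m \<in> quotA (i + 1)"
  unfolding right_factor_def quotA_supported
proof (rule quot.prod_in)
  fix k assume r: "right_quot_mon i m" and k: "k \<in> {k. Inr k \<in> Poly_Mapping.keys m}"
  then have "k \<noteq> 0" by (cases k) (auto simp: right_quot_mon_def in_keys_iff)
  then show "var k ^ Poly_Mapping.lookup m (Inr k) \<in> supported (quot_mon (i + 1))"
    using r by (auto simp: var_power quot_mon_def right_quot_mon_def lookup_single when_def
                     intro!: supported_single)
qed

(* psi(xi_k)^(2^(i+2-k)) = sum xi_k1^(2^(i+2-k)) (x) xi_(k-k1)^(2^(i+2-k+k1)) *)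
lemma psi_gen_power_in: "psi_gen k ^ (2 ^ (i + 2 - k)) \<in> supported (right_quot_mon i)"
proof -
  have left: "xiL k1 ^ n \<in> supported (right_quot_mon i)" for k1 n
    by (cases "k1 = 0")
       (auto simp: xiL_def var_power right_quot_mon_def lookup_single when_def intro!: supported_single)
  have right: "xiR (k - k1) ^ (2 ^ k1 * 2 ^ (i + 2 - k)) \<in> supported (right_quot_mon i)"
    if "k1 \<le> k" for k1
  proof (cases "k - k1 = 0")
    case False
    have "i + 2 - (k - k1) \<le> k1 + (i + 2 - k)" using that by linarith
    then have "(2::nat) ^ (i + 2 - (k - k1)) dvd 2 ^ k1 * 2 ^ (i + 2 - k)"
      by (simp add: le_imp_power_dvd power_add[symmetric])
    then show ?thesis using False
      by (auto simp: xiR_def var_power right_quot_mon_def lookup_single when_def intro!: supported_single)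
  qed (simp add: xiR_def)
  have "psi_gen k ^ (2 ^ (i + 2 - k))
      = (\<Sum>k1\<le>k. xiL k1 ^ (2 ^ (i + 2 - k)) * xiR (k - k1) ^ (2 ^ k1 * 2 ^ (i + 2 - k)))"
    by (simp add: psi_gen_def frobenius_sum power_mult_distrib power_mult)
  also have "\<dots> \<in> supported (right_quot_mon i)"
    by (intro supported_sum right_quot.mult_in left right) auto
  finally show ?thesis .
qed

lemma psi_in: "a \<in> quotA (i + 1) \<Longrightarrow> psi a \<in> supported (right_quot_mon i)"
  unfolding psi_peval quotA_supported
proof (rule quot.peval_in[OF right_quot.monomial_submonoid_axioms])
  fix m assume m: "quot_mon (i + 1) m"
  show "mon psi_gen m \<in> supported (right_quot_mon i)"
    unfolding mon_def
  proof (rule right_quot.prod_in)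
    fix k assume "k \<in> Poly_Mapping.keys m"
    show "psi_gen k ^ Poly_Mapping.lookup m k \<in> supported (right_quot_mon i)"
      unfolding quot_mon_power(2)[OF m \<open>k \<in> Poly_Mapping.keys m\<close>]
      by (intro right_quot.power_in psi_gen_power_in)
  qed
qed

lemma psi_shift_subst: "psi (shift_subst (Suc j)) = psi_gen j"
  by (cases "j = 0") (auto simp: shift_subst_def psi_peval psi_gen_def xiL_def xiR_def)

lemma id_tensor_shift_psi_gen:
  "peval (id_tensor_subst shift_subst) (psi_gen (Suc j)) = psi_gen j + var (Inl (Suc j))"
proof -
  have L: "peval (id_tensor_subst shift_subst) (xiL k) = xiL k" for k
    by (simp add: xiL_def id_tensor_subst_def)
  have R: "peval (id_tensor_subst shift_subst) (xiR b) = xiR (b - 1)" for b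
    by (auto simp: xiR_def id_tensor_subst_def embR_def shift_subst_def)
  have "peval (id_tensor_subst shift_subst) (psi_gen (Suc j))
      = (\<Sum>k1\<le>Suc j. xiL k1 * xiR (Suc j - k1 - 1) ^ (2 ^ k1))"
    by (simp only: psi_gen_def peval_sum peval_mult peval_power L R)
  also have "\<dots> = (\<Sum>k1\<le>j. xiL k1 * xiR (j - k1) ^ (2 ^ k1)) + xiL (Suc j) * xiR 0 ^ (2 ^ Suc j)"
    by (simp add: sum.atMost_Suc)
  finally show ?thesis
    by (simp add: psi_gen_def xiL_def xiR_def)
qed

lemma comodule_defect:
  assumes a: "a \<in> quotA (i + 1)"
  shows "peval (\<lambda>k. peval (id_tensor_subst shift_subst) (psi_gen k)) a - peval (\<lambda>k. psi (shift_subst k)) a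
         \<in> supported (\<lambda>m. \<not> kept i m)"
proof -
  let ?G = "\<lambda>k. peval (id_tensor_subst shift_subst) (psi_gen k)" and ?F = "\<lambda>k. psi (shift_subst k)"
  have gen_defect: "?G k ^ (2 ^ (i + 2 - k)) - ?F k ^ (2 ^ (i + 2 - k)) \<in> supported (\<lambda>m. \<not> kept i m)"
    if "k \<ge> 1" for k
  proof -
    obtain j where j: "k = Suc j" using \<open>k \<ge> 1\<close> by (cases k) auto
    have "?G k ^ (2 ^ (i + 2 - k)) - ?F k ^ (2 ^ (i + 2 - k)) = var (Inl k) ^ (2 ^ (i + 2 - k))"
      by (simp add: j id_tensor_shift_psi_gen psi_shift_subst frobenius)
    also have "\<dots> \<in> supported (\<lambda>m. \<not> kept i m)"
      using \<open>k \<ge> 1\<close> by (auto simp: var_power kept_def intro!: supported_single exI[of _ k])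
    finally show ?thesis .
  qed
  show ?thesis
  proof (rule killed.peval_diff_in)
    fix m assume m: "quot_mon (i + 1) m"
    show "mon ?G m - mon ?F m \<in> supported (\<lambda>m. \<not> kept i m)"
      unfolding mon_def
    proof (rule killed.prod_diff_in)
      fix k assume k: "k \<in> Poly_Mapping.keys m"
      show "?G k ^ Poly_Mapping.lookup m k - ?F k ^ Poly_Mapping.lookup m k \<in> supported (\<lambda>m. \<not> kept i m)"
        unfolding quot_mon_power(2)[OF m k, of "?G k"] quot_mon_power(2)[OF m k, of "?F k"]
        by (intro killed.power_diff_in gen_defect quot_mon_power(1)[OF m k])
    qed
  qed (use a in \<open>simp add: quotA_supported\<close>)
qed

theorem lemma5p1:
  fixes i :: nat
  shows "(\<exists>\<phi>. ring_hom_on (quotA (i + 1)) (quotA i) \<phi> \<and> phi_gens i \<phi>) \<and>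
         (\<forall>\<phi>. ring_hom_on (quotA (i + 1)) (quotA i) \<phi> \<and> phi_gens i \<phi> \<longrightarrow>
               comod_map i (quotA (i + 1)) \<phi>)"
proof (intro conjI allI impI)
  show "\<exists>\<phi>. ring_hom_on (quotA (i + 1)) (quotA i) \<phi> \<and> phi_gens i \<phi>"
    using shift_hom shift_gens by blast
next
  fix phi
  assume "ring_hom_on (quotA (i + 1)) (quotA i) phi \<and> phi_gens i phi"
  then have phi: "a \<in> quotA (i + 1) \<Longrightarrow> phi a = shift a" for a
    using phi_eq_shift by blast
  show "comod_map i (quotA (i + 1)) phi"
    unfolding comod_map_def
  proof
    fix a assume a: "a \<in> quotA (i + 1)"
    have "coact i (phi a) = truncL i (peval (\<lambda>k. psi (shift_subst k)) a)"
      by (simp add: coact_def phi[OF a] psi_peval peval_comp)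
    also have "\<dots> = truncL i (peval (\<lambda>k. peval (id_tensor_subst shift_subst) (psi_gen k)) a)"
      using comodule_defect[OF a] by (rule truncL_eq[symmetric])
    also have "\<dots> = truncL i (idtens shift (psi a))"
      by (simp add: idtens_peval psi_peval peval_comp)
    also have "idtens shift (psi a) = idtens phi (psi a)"
    proof (rule idtens_cong)
      fix m assume "m \<in> Poly_Mapping.keys (psi a)"
      then have "right_quot_mon i m" using psi_in[OF a] by (simp add: supported_def)
      then show "shift (right_factor m) = phi (right_factor m)"
        using phi right_factor_in by metis
    qed
    finally show "coact i (phi a) = truncL i (idtens phi (psi a))" .
  qed
qed

end
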